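(* Place the almost positive roots of type $C_n$ in the off-diagonal entries of an $(n+1)\times(n+1)$ array via: entry $(1,j)$ ($2\le j\le n+1$) is $-\alpha_{j-1}$; entry $(i,j)$ with $2\le i<j$ is $\varepsilon_{i-1}-\varepsilon_{j-1}$; entry $(i,j)$ with $i>j$ is $\varepsilon_j+\varepsilon_{i-1}$. Then any two almost positive roots lying in the same row or in the same column of this array are $\underline c$-compatible.
   Context: Type $C_n$: standard basis $\varepsilon_i$ of $\mathbb{R}^n$, simple roots $\alpha_i=\varepsilon_i-\varepsilon_{i+1}$ ($i<n$), $\alpha_n=2\varepsilon_n$, $\Pi$ the simple roots, $\Phi_+=\{\varepsilon_i\pm\varepsilon_j:i<j\}\cup\{2\varepsilon_i\}$, $\Phi_{\ge-1}=\Phi_+\sqcup(-\Pi)$. With simple reflections $s_i$ and $c=s_1\cdots s_n$, $\tau:\Phi_{\ge-1}\to\Phi_{\ge-1}$ is $\tau(-\alpha_i)=s_1\cdots s_{i-1}(\alpha_i)$, $\tau(s_n\cdots s_{i+1}(\alpha_i))=-\alpha_i$, $\tau(\alpha)=c(\alpha)$ otherwise. The $\underline c$-compatibility degree is the unique $\tau$-invariant function $\Phi_{\ge-1}^2\to\mathbb{Z}$ with $(-\alpha\|_{\underline c}-\alpha')=0$ for $\alpha,\alpha'\in\Pi$ and $(-\alpha\|_{\underline c}\beta)=[\beta:\alpha]$ (coefficient of $\alpha$ in $\beta$) for $\alpha\in\Pi,\beta\in\Phi_+$; two roots are $\underline c$-compatible if their degree is $0$. *)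

theory Defs
  imports Complex_Main "HOL-Library.Function_Algebras"
begin

text \<open>Vectors of R^n are modelled as functions nat => real, with coordinates
indexed by 1..n (coordinates outside 1..n are zero for all vectors we use).\<close>

type_synonym vec = "nat \<Rightarrow> real"

definition smul :: "real \<Rightarrow> vec \<Rightarrow> vec" where
  "smul c v = (\<lambda>k. c * v k)"

definition eps :: "nat \<Rightarrow> vec" where
  "eps i = (\<lambda>k. if k = i then 1 else 0)"

definition dotC :: "nat \<Rightarrow> vec \<Rightarrow> vec \<Rightarrow> real" where
  "dotC n u v = (\<Sum>k\<in>{1..n}. u k * v k)"

definition alpha :: "nat \<Rightarrow> nat \<Rightarrow> vec" where
  "alpha n i = (if i < n then eps i - eps (Suc i) else smul 2 (eps n))"

definition simple_roots :: "nat \<Rightarrow> vec set" where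
  "simple_roots n = alpha n ` {1..n}"

definition pos_roots :: "nat \<Rightarrow> vec set" where
  "pos_roots n =
     {eps i - eps j | i j. 1 \<le> i \<and> i < j \<and> j \<le> n}
   \<union> {eps i + eps j | i j. 1 \<le> i \<and> i < j \<and> j \<le> n}
   \<union> {smul 2 (eps i) | i. 1 \<le> i \<and> i \<le> n}"

definition almost_pos :: "nat \<Rightarrow> vec set" where
  "almost_pos n = pos_roots n \<union> uminus ` simple_roots n"

definition refl :: "nat \<Rightarrow> vec \<Rightarrow> vec \<Rightarrow> vec" where
  "refl n a v = v - smul (2 * dotC n v a / dotC n a a) a"

definition sref :: "nat \<Rightarrow> nat \<Rightarrow> vec \<Rightarrow> vec" where
  "sref n i = refl n (alpha n i)"

definition sprod :: "nat \<Rightarrow> nat list \<Rightarrow> vec \<Rightarrow> vec" where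
  "sprod n is v = foldr (sref n) is v"

definition cox :: "nat \<Rightarrow> vec \<Rightarrow> vec" where
  "cox n = sprod n [1..<Suc n]"

definition tau :: "nat \<Rightarrow> vec \<Rightarrow> vec" where
  "tau n b =
    (if \<exists>i\<in>{1..n}. b = - alpha n i then
       (let i = (THE i. i \<in> {1..n} \<and> b = - alpha n i)
        in sprod n [1..<i] (alpha n i))
     else if \<exists>i\<in>{1..n}. b = sprod n (rev [Suc i..<Suc n]) (alpha n i) then
       (let i = (THE i. i \<in> {1..n} \<and> b = sprod n (rev [Suc i..<Suc n]) (alpha n i))
        in - alpha n i)
     else cox n b)"

definition coeff :: "nat \<Rightarrow> vec \<Rightarrow> nat \<Rightarrow> real" where
  "coeff n b i = (THE c. (\<forall>k. k \<notin> {1..n} \<longrightarrow> c k = 0) \<and>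
                        b = (\<Sum>k\<in>{1..n}. smul (c k) (alpha n k))) i"

definition is_compat_degree :: "nat \<Rightarrow> (vec \<Rightarrow> vec \<Rightarrow> int) \<Rightarrow> bool" where
  "is_compat_degree n f \<longleftrightarrow>
     (\<forall>a\<in>almost_pos n. \<forall>b\<in>almost_pos n. f (tau n a) (tau n b) = f a b)
   \<and> (\<forall>i\<in>{1..n}. \<forall>j\<in>{1..n}. f (- alpha n i) (- alpha n j) = 0)
   \<and> (\<forall>i\<in>{1..n}. \<forall>b\<in>pos_roots n. real_of_int (f (- alpha n i) b) = coeff n b i)"

definition compat_degree :: "nat \<Rightarrow> vec \<Rightarrow> vec \<Rightarrow> int" where
  "compat_degree n = (THE f. is_compat_degree n f \<and>
     (\<forall>a b. \<not> (a \<in> almost_pos n \<and> b \<in> almost_pos n) \<longrightarrow> f a b = 0))"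

definition compatible :: "nat \<Rightarrow> vec \<Rightarrow> vec \<Rightarrow> bool" where
  "compatible n a b \<longleftrightarrow> compat_degree n a b = 0"

definition entry :: "nat \<Rightarrow> nat \<Rightarrow> nat \<Rightarrow> vec" where
  "entry n i j =
    (if i = 1 then - alpha n (j - 1)
     else if i < j then eps (i - 1) - eps (j - 1)
     else eps j + eps (i - 1))"

end

(*
  The map tau permutes the array: it sends the entry in position (i, j) to the entry in position
  (i + 1, j + 1), indices taken cyclically in {1..n+1}, and the negative simple roots form exactly
  row 1.  So every tau-orbit meets row 1 once per period n + 1, and a tau-invariant function is
  determined by its values with first argument in row 1.  This gives existence and uniqueness of
  the compatibility degree, and shows that (entry i j || entry k l) is the coefficient of
  alpha_(j'-1) in entry k' l', where the primes denote the rotation taking i to 1.  Two entries of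
  one row both rotate into row 1, so their degree is 0.  For two entries of column i, rotating the
  first into row 1 leaves the second in column i', and every root in column i' has coefficient 0
  on alpha_(i'-1).
*)
theory Submission
  imports Defs
begin

section \<open>Invariant functions along periodic orbits\<close>

lemma funpow_mem: "T ` A \<subseteq> A \<Longrightarrow> a \<in> A \<Longrightarrow> (T ^^ m) a \<in> A"
  by (induction m) auto

lemma funpow_invariant:
  assumes "T ` A \<subseteq> A" "\<And>a b. a \<in> A \<Longrightarrow> b \<in> A \<Longrightarrow> h (T a) (T b) = h a b"
    and "a \<in> A" "b \<in> A"
  shows "h ((T ^^ m) a) ((T ^^ m) b) = h a b"
  by (induction m) (simp_all add: assms funpow_mem)

lemma invariant_eq_if_eq_on_transversal:
  assumes closed: "T ` A \<subseteq> A" and reach: "\<And>a. a \<in> A \<Longrightarrow> \<exists>m. (T ^^ m) a \<in> S"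
    and inv: "\<And>a b. a \<in> A \<Longrightarrow> b \<in> A \<Longrightarrow> h (T a) (T b) = h a b"
    and inv': "\<And>a b. a \<in> A \<Longrightarrow> b \<in> A \<Longrightarrow> h' (T a) (T b) = h' a b"
    and agree: "\<And>a b. a \<in> S \<Longrightarrow> b \<in> A \<Longrightarrow> h a b = h' a b"
    and "a \<in> A" "b \<in> A"
  shows "h a b = h' a b"
proof -
  obtain m where "(T ^^ m) a \<in> S"
    using reach[OF \<open>a \<in> A\<close>] by blast
  then have "h ((T ^^ m) a) ((T ^^ m) b) = h' ((T ^^ m) a) ((T ^^ m) b)"
    using agree funpow_mem[OF closed \<open>b \<in> A\<close>] by blast
  then show ?thesis
    using funpow_invariant[of T A h, OF closed inv] funpow_invariant[of T A h', OF closed inv']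
      \<open>a \<in> A\<close> \<open>b \<in> A\<close>
    by simp
qed

definition first_visit :: "('a \<Rightarrow> 'a) \<Rightarrow> 'a set \<Rightarrow> 'a \<Rightarrow> nat" where
  "first_visit T S a = (LEAST m. (T ^^ m) a \<in> S)"

lemma funpow_first_visit:
  assumes "\<exists>m. (T ^^ m) a \<in> S"
  shows "(T ^^ first_visit T S a) a \<in> S"
  using assms LeastI_ex[of "\<lambda>m. (T ^^ m) a \<in> S"] by (simp add: first_visit_def)

lemma first_visit_eq_0_iff:
  assumes "\<exists>m. (T ^^ m) a \<in> S"
  shows "first_visit T S a = 0 \<longleftrightarrow> a \<in> S"
  using funpow_first_visit[OF assms] by (auto simp: first_visit_def Least_eq_0)

lemma Suc_first_visit_apply:
  assumes period: "(T ^^ N) a = a"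
    and reach: "\<exists>m<N. (T ^^ m) a \<in> S"
    and once: "\<And>m. a \<in> S \<Longrightarrow> 0 < m \<Longrightarrow> m < N \<Longrightarrow> (T ^^ m) a \<notin> S"
  shows "Suc (first_visit T S (T a)) = (if a \<in> S then N else first_visit T S a)"
proof (cases "a \<in> S")
  case True
  obtain N' where N: "N = Suc N'"
    using reach by (cases N) auto
  have "first_visit T S (T a) = N'"
    unfolding first_visit_def
  proof (rule Least_equality)
    show "(T ^^ N') (T a) \<in> S"
      using period True by (simp add: N funpow_swap1)
    show "N' \<le> m" if "(T ^^ m) (T a) \<in> S" for m
    proof (rule ccontr)
      assume "\<not> N' \<le> m"
      moreover have "(T ^^ Suc m) a \<in> S"
        using that by (simp add: funpow_swap1)
      ultimately show False
        using once[OF True, of "Suc m"] by (simp add: N)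
    qed
  qed
  then show ?thesis
    using True N by simp
next
  case False
  have "\<exists>m. (T ^^ m) a \<in> S"
    using reach by blast
  then obtain k where k: "first_visit T S a = Suc k"
    using False first_visit_eq_0_iff not0_implies_Suc by metis
  have "first_visit T S (T a) = k"
    unfolding first_visit_def
  proof (rule Least_equality)
    show "(T ^^ k) (T a) \<in> S"
      using funpow_first_visit[OF \<open>\<exists>m. (T ^^ m) a \<in> S\<close>] k by (simp add: funpow_swap1)
    show "k \<le> m" if "(T ^^ m) (T a) \<in> S" for m
      using that Least_le[of "\<lambda>m. (T ^^ m) a \<in> S" "Suc m"] k
      by (simp add: first_visit_def funpow_swap1)
  qed
  then show ?thesis
    using False k by simp
qed

lemma invariant_extension:
  assumes "T ` A \<subseteq> A"
    and period: "\<And>a. a \<in> A \<Longrightarrow> (T ^^ N) a = a"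
    and reach: "\<And>a. a \<in> A \<Longrightarrow> \<exists>m<N. (T ^^ m) a \<in> S"
    and once: "\<And>a m. a \<in> S \<Longrightarrow> 0 < m \<Longrightarrow> m < N \<Longrightarrow> (T ^^ m) a \<notin> S"
  shows "\<exists>f. (\<forall>a\<in>A. \<forall>b\<in>A. f (T a) (T b) = f a b) \<and> (\<forall>a\<in>S. \<forall>b. f a b = g a b)"
proof -
  have step: "(T ^^ first_visit T S (T a)) (T x) = (T ^^ first_visit T S a) x"
    if "a \<in> A" "x \<in> A" for a x
  proof -
    have ex: "\<exists>m. (T ^^ m) a \<in> S"
      using reach[OF that(1)] by blast
    have visit: "Suc (first_visit T S (T a)) = (if a \<in> S then N else first_visit T S a)"
      using that(1) by (intro Suc_first_visit_apply period reach once)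
    have "(T ^^ first_visit T S (T a)) (T x) = (T ^^ Suc (first_visit T S (T a))) x"
      by (simp add: funpow_swap1)
    also have "\<dots> = (T ^^ (if a \<in> S then N else first_visit T S a)) x"
      unfolding visit ..
    also have "\<dots> = (T ^^ first_visit T S a) x"
      using period[OF that(2)] first_visit_eq_0_iff[OF ex] by auto
    finally show ?thesis .
  qed
  define f where "f a b = g ((T ^^ first_visit T S a) a) ((T ^^ first_visit T S a) b)" for a b
  have "f (T a) (T b) = f a b" if "a \<in> A" "b \<in> A" for a b
    using step that by (simp add: f_def)
  moreover have "f a b = g a b" if "a \<in> S" for a b
    using that by (simp add: f_def first_visit_def Least_eq_0)
  ultimately show ?thesis by blast
qed

section \<open>Simple reflections as signed permutations of coordinates\<close>

lemma dotC_eps: "dotC n v (eps k) = (if k \<in> {1..n} then v k else 0)"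
  unfolding dotC_def eps_def by (simp add: if_distrib cong: if_cong)

lemma dotC_diff: "dotC n v (a - b) = dotC n v a - dotC n v b"
  unfolding dotC_def by (simp add: sum_subtractf right_diff_distrib)

lemma dotC_smul: "dotC n v (smul c a) = c * dotC n v a"
  unfolding dotC_def smul_def by (simp add: sum_distrib_left mult_ac)

lemma eps_inj: "eps p = eps q \<Longrightarrow> p = q"
  by (drule fun_cong[of _ _ p]) (simp add: eps_def split: if_splits)

lemma alpha_apply:
  assumes "k \<le> n"
  shows "alpha n k x = (if x = k then (if k < n then 1 else 2) else 0)
                     - (if x = Suc k \<and> k < n then 1 else 0)"
  using assms by (auto simp: alpha_def eps_def smul_def)

lemma sref_swap:
  assumes "1 \<le> k" "k < n"
  shows "sref n k v = v(k := v (Suc k), Suc k := v k)"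
proof -
  have alpha: "alpha n k = eps k - eps (Suc k)"
    using assms by (simp add: alpha_def)
  have "dotC n v (eps k - eps (Suc k)) = v k - v (Suc k)"
    and "dotC n (eps k - eps (Suc k)) (eps k - eps (Suc k)) = 2"
    using assms by (simp_all add: dotC_diff dotC_eps) (simp_all add: eps_def)
  then show ?thesis
    unfolding sref_def refl_def alpha by (auto simp: smul_def eps_def fun_eq_iff field_simps)
qed

lemma sref_last:
  assumes "1 \<le> n"
  shows "sref n n v = v(n := - v n)"
proof -
  have "dotC n v (smul 2 (eps n)) = 2 * v n"
    and "dotC n (smul 2 (eps n)) (smul 2 (eps n)) = 4"
    using assms by (simp_all add: dotC_smul dotC_eps) (simp_all add: smul_def eps_def)
  then show ?thesis
    unfolding sref_def refl_def alpha_def by (auto simp: smul_def eps_def fun_eq_iff)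
qed

lemma sprod_upto:
  assumes "1 \<le> p" "p \<le> n"
  shows "sprod n [1..<p] v = (\<lambda>x. if x = 1 then v p else if 2 \<le> x \<and> x \<le> p then v (x - 1) else v x)"
  using assms
proof (induction p arbitrary: v rule: nat_induct_at_least)
  case base
  then show ?case by (auto simp: sprod_def)
next
  case (Suc p)
  have "sprod n [1..<Suc p] v = sprod n [1..<p] (sref n p v)"
    using Suc.hyps by (simp add: sprod_def)
  then show ?case
    using Suc by (auto simp: sref_swap fun_eq_iff)
qed

lemma sprod_upto_alpha:
  assumes "p \<in> {1..n}"
  shows "sprod n [1..<p] (alpha n p) = (if p < n then eps 1 - eps (Suc p) else smul 2 (eps 1))"
proof -
  have "sprod n [1..<p] (alpha n p) = (\<lambda>x. if x = 1 then alpha n p p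
      else if 2 \<le> x \<and> x \<le> p then alpha n p (x - 1) else alpha n p x)"
    using assms by (intro sprod_upto) auto
  then show ?thesis
    using assms by (auto simp: alpha_apply eps_def smul_def fun_eq_iff)
qed

lemma cox_apply:
  assumes "1 \<le> n"
  shows "cox n v = (\<lambda>x. if x = 1 then - v n else if 2 \<le> x \<and> x \<le> n then v (x - 1) else v x)"
proof -
  have "cox n v = sprod n [1..<n] (sref n n v)"
    using assms by (simp add: cox_def sprod_def)
  also have "\<dots> = (\<lambda>x. if x = 1 then sref n n v n
      else if 2 \<le> x \<and> x \<le> n then sref n n v (x - 1) else sref n n v x)"
    by (rule sprod_upto[OF assms order_refl])
  finally show ?thesis
    using assms by (auto simp: sref_last fun_eq_iff)
qed

lemma cox_diff: "1 \<le> n \<Longrightarrow> cox n (u - v) = cox n u - cox n v"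
  by (auto simp: cox_apply)

lemma cox_add: "1 \<le> n \<Longrightarrow> cox n (u + v) = cox n u + cox n v"
  by (auto simp: cox_apply)

lemma cox_eps:
  assumes "1 \<le> a" "a \<le> n"
  shows "cox n (eps a) = (if a = n then - eps 1 else eps (Suc a))"
  using assms by (auto simp: cox_apply eps_def fun_eq_iff)

lemma sprod_down_alpha:
  assumes "1 \<le> p" "p \<le> m" "m < n"
  shows "sprod n (rev [Suc p..<Suc m]) (alpha n p) = eps p - eps (Suc m)"
  using assms(2,3)
proof (induction m rule: nat_induct_at_least)
  case base
  then show ?case by (simp add: sprod_def alpha_def)
next
  case (Suc m)
  then have "sprod n (rev [Suc p..<Suc (Suc m)]) (alpha n p)
      = sref n (Suc m) (sprod n (rev [Suc p..<Suc m]) (alpha n p))"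
    by (simp add: sprod_def)
  then show ?case
    using Suc assms(1) by (auto simp: sref_swap eps_def fun_eq_iff)
qed

lemma sprod_rev_alpha:
  assumes "p \<in> {1..n}"
  shows "sprod n (rev [Suc p..<Suc n]) (alpha n p) = eps p + eps n"
proof (cases "p = n")
  case True
  then show ?thesis by (auto simp: sprod_def alpha_def smul_def eps_def)
next
  case False
  then have "sprod n (rev [Suc p..<Suc n]) (alpha n p) = sref n n (eps p - eps n)"
    using assms sprod_down_alpha[of p "n - 1" n] by (cases n) (auto simp: sprod_def)
  then show ?thesis
    using assms False by (auto simp: sref_last eps_def fun_eq_iff)
qed

section \<open>Coordinates in the basis of simple roots\<close>

lemma sum_fun_apply: "(\<Sum>k\<in>A. f k) x = (\<Sum>k\<in>A. f k x)"
  by (induct A rule: infinite_finite_induct) auto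

definition simple_comb :: "nat \<Rightarrow> (nat \<Rightarrow> real) \<Rightarrow> vec" where
  "simple_comb n c = (\<Sum>k\<in>{1..n}. smul (c k) (alpha n k))"

text \<open>Since \<open>alpha_k = eps_k - eps_(k+1)\<close> for \<open>k < n\<close> and \<open>alpha_n = 2 eps_n\<close>, the
  coefficient of \<open>alpha_p\<close> is the partial sum \<open>v_1 + ... + v_p\<close>, halved for \<open>p = n\<close>.\<close>
definition simple_coord :: "nat \<Rightarrow> vec \<Rightarrow> nat \<Rightarrow> real" where
  "simple_coord n v p = (\<Sum>x\<in>{1..p}. v x) / (if p < n then 1 else 2)"

lemma simple_comb_apply:
  "simple_comb n c x =
     (if x \<in> {1..n} then (if x < n then 1 else 2) * c x - (if 2 \<le> x then c (x - 1) else 0) else 0)"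
proof -
  have summand: "c k * alpha n k x = (if k = x then (if k < n then 1 else 2) * c k else 0)
      - (if 2 \<le> x \<and> x \<le> n then (if k = x - 1 then c k else 0) else 0)" if "k \<in> {1..n}" for k
    using that by (auto simp: alpha_apply)
  have "simple_comb n c x = (\<Sum>k\<in>{1..n}. c k * alpha n k x)"
    by (simp add: simple_comb_def sum_fun_apply smul_def)
  also have "\<dots> = (\<Sum>k\<in>{1..n}. if k = x then (if k < n then 1 else 2) * c k else 0)
      - (\<Sum>k\<in>{1..n}. if 2 \<le> x \<and> x \<le> n then (if k = x - 1 then c k else 0) else 0)"
    unfolding sum_subtractf[symmetric] by (rule sum.cong) (simp_all add: summand)
  also have "\<dots> = (if x \<in> {1..n} then (if x < n then 1 else 2) * c x - (if 2 \<le> x then c (x - 1) else 0) else 0)"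
    by (auto simp: sum.delta' cong: if_cong)
  finally show ?thesis .
qed

lemma simple_coord_simple_comb:
  assumes "p \<in> {1..n}"
  shows "simple_coord n (simple_comb n c) p = c p"
proof -
  have "(\<Sum>x\<in>{1..p}. simple_comb n c x) = (if p < n then 1 else 2) * c p" if "1 \<le> p" "p \<le> n" for p
    using that by (induction p rule: nat_induct_at_least) (simp_all add: simple_comb_apply)
  then show ?thesis
    using assms by (simp add: simple_coord_def)
qed

lemma simple_comb_simple_coord:
  assumes "\<And>x. x \<notin> {1..n} \<Longrightarrow> v x = 0"
  shows "simple_comb n (simple_coord n v) = v"
proof
  fix x
  show "simple_comb n (simple_coord n v) x = v x"
  proof (cases "x \<in> {1..n}")
    case True
    then obtain y where "x = Suc y" by (cases x) auto
    then show ?thesis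
      using True by (simp add: simple_comb_apply simple_coord_def)
  next
    case False
    then show ?thesis by (auto simp: simple_comb_apply assms)
  qed
qed

lemma coeff_eq_simple_coord:
  assumes "\<And>x. x \<notin> {1..n} \<Longrightarrow> v x = 0" and "p \<in> {1..n}"
  shows "coeff n v p = simple_coord n v p"
proof -
  let ?c = "\<lambda>k. if k \<in> {1..n} then simple_coord n v k else 0"
  have "simple_comb n ?c = simple_comb n (simple_coord n v)"
    unfolding simple_comb_def by (rule sum.cong) auto
  then have "simple_comb n ?c = v"
    using simple_comb_simple_coord[OF assms(1)] by simp
  then have "(THE c. (\<forall>k. k \<notin> {1..n} \<longrightarrow> c k = 0) \<and> v = simple_comb n c) = ?c"
  proof (intro the_equality conjI allI impI)
    fix c assume c: "(\<forall>k. k \<notin> {1..n} \<longrightarrow> c k = 0) \<and> v = simple_comb n c"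
    show "c = ?c"
    proof
      fix k
      show "c k = ?c k"
        using c simple_coord_simple_comb[of k n c] by auto
    qed
  qed auto
  then show ?thesis
    unfolding coeff_def simple_comb_def[symmetric] using assms(2) by simp
qed

lemma simple_coord_add: "simple_coord n (u + v) p = simple_coord n u p + simple_coord n v p"
  by (simp add: simple_coord_def sum.distrib add_divide_distrib)

lemma simple_coord_diff: "simple_coord n (u - v) p = simple_coord n u p - simple_coord n v p"
  by (simp add: simple_coord_def sum_subtractf diff_divide_distrib)

lemma simple_coord_uminus: "simple_coord n (- v) p = - simple_coord n v p"
  by (simp add: simple_coord_def sum_negf)

lemma simple_coord_smul: "simple_coord n (smul c v) p = c * simple_coord n v p"
  by (simp add: simple_coord_def smul_def sum_distrib_left)

lemma simple_coord_eps:
  "simple_coord n (eps a) p = (if 1 \<le> a \<and> a \<le> p then 1 else 0) / (if p < n then 1 else 2)"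
  by (simp add: simple_coord_def eps_def sum.delta')

lemma simple_coord_alpha_self:
  assumes "k \<in> {1..n}"
  shows "simple_coord n (alpha n k) k = 1"
  using assms by (auto simp: alpha_def simple_coord_diff simple_coord_smul simple_coord_eps)

lemma simple_coord_pos_root:
  assumes "b \<in> pos_roots n"
  shows "simple_coord n b p \<in> {0, 1, 2}"
  using assms by (cases "p < n")
    (auto simp: pos_roots_def simple_coord_add simple_coord_diff simple_coord_smul simple_coord_eps
      split: if_split_asm)

lemma pos_root_outside:
  assumes "b \<in> pos_roots n" "x \<notin> {1..n}"
  shows "b x = 0"
  using assms by (auto simp: pos_roots_def eps_def smul_def)

lemma pos_root_ne_neg_alpha:
  assumes "b \<in> pos_roots n" "k \<in> {1..n}"
  shows "b \<noteq> - alpha n k"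
proof
  assume "b = - alpha n k"
  then have "simple_coord n b k = -1"
    using assms(2) by (simp add: simple_coord_uminus simple_coord_alpha_self)
  then show False
    using simple_coord_pos_root[OF assms(1), of k] by auto
qed

lemma coeff_pos_root_Ints:
  assumes "b \<in> pos_roots n" "p \<in> {1..n}"
  shows "coeff n b p \<in> \<int>"
  using coeff_eq_simple_coord[OF pos_root_outside[OF assms(1)] assms(2)]
    simple_coord_pos_root[OF assms(1), of p]
  by auto

lemma neg_alpha_inj:
  assumes "p \<in> {1..n}" "q \<in> {1..n}" "- alpha n p = - alpha n q"
  shows "p = q"
proof -
  have "alpha n p p = alpha n q p"
    using assms(3) by (metis minus_equation_iff)
  then show ?thesis
    using assms(1,2) by (auto simp: alpha_apply split: if_splits)
qed

section \<open>The array of almost positive roots\<close>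

definition off_diagonal :: "nat \<Rightarrow> (nat \<times> nat) set" where
  "off_diagonal n = {(i, j). i \<in> {1..Suc n} \<and> j \<in> {1..Suc n} \<and> i \<noteq> j}"

lemma entry_pos_root:
  assumes "(i, j) \<in> off_diagonal n" "i \<noteq> 1"
  shows "entry n i j \<in> pos_roots n"
proof -
  have i: "2 \<le> i" "i \<le> Suc n" and j: "1 \<le> j" "j \<le> Suc n" "i \<noteq> j"
    using assms by (auto simp: off_diagonal_def)
  consider "i < j" | "j < i - 1" | "j = i - 1"
    using j(3) by linarith
  then show ?thesis
  proof cases
    case 1
    then have "entry n i j = eps (i - 1) - eps (j - 1)" "1 \<le> i - 1" "i - 1 < j - 1" "j - 1 \<le> n"
      using i j by (auto simp: entry_def)
    then show ?thesis unfolding pos_roots_def by blast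
  next
    case 2
    then have "entry n i j = eps j + eps (i - 1)" "1 \<le> j" "j < i - 1" "i - 1 \<le> n"
      using i j by (auto simp: entry_def)
    then show ?thesis unfolding pos_roots_def by blast
  next
    case 3
    then have "entry n i j = smul 2 (eps j)" "1 \<le> j" "j \<le> n"
      using i j by (auto simp: entry_def smul_def fun_eq_iff)
    then show ?thesis unfolding pos_roots_def by blast
  qed
qed

lemma pos_root_is_entry:
  assumes "b \<in> pos_roots n"
  shows "\<exists>i j. (i, j) \<in> off_diagonal n \<and> i \<noteq> 1 \<and> b = entry n i j"
  using assms unfolding pos_roots_def
proof (elim UnE CollectE exE conjE)
  fix a c assume "b = eps a - eps c" "1 \<le> a" "a < c" "c \<le> n"
  then show ?thesis
    by (intro exI[of _ "Suc a"] exI[of _ "Suc c"]) (auto simp: off_diagonal_def entry_def)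
next
  fix a c assume "b = eps a + eps c" "1 \<le> a" "a < c" "c \<le> n"
  then show ?thesis
    by (intro exI[of _ "Suc c"] exI[of _ a]) (auto simp: off_diagonal_def entry_def)
next
  fix a assume "b = smul 2 (eps a)" "1 \<le> a" "a \<le> n"
  then show ?thesis
    by (intro exI[of _ "Suc a"] exI[of _ a]) (auto simp: off_diagonal_def entry_def smul_def fun_eq_iff)
qed

lemma almost_pos_eq_entries: "almost_pos n = (\<lambda>(i, j). entry n i j) ` off_diagonal n"
proof (intro equalityI subsetI)
  fix b assume "b \<in> almost_pos n"
  then consider "b \<in> pos_roots n" | k where "k \<in> {1..n}" "b = - alpha n k"
    unfolding almost_pos_def simple_roots_def by auto
  then show "b \<in> (\<lambda>(i, j). entry n i j) ` off_diagonal n"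
  proof cases
    case 1
    then show ?thesis using pos_root_is_entry by fast
  next
    case 2
    then have "(1, Suc k) \<in> off_diagonal n" "b = entry n 1 (Suc k)"
      by (auto simp: off_diagonal_def entry_def)
    then show ?thesis by force
  qed
next
  fix b assume "b \<in> (\<lambda>(i, j). entry n i j) ` off_diagonal n"
  then obtain i j where ij: "(i, j) \<in> off_diagonal n" "b = entry n i j" by auto
  show "b \<in> almost_pos n"
  proof (cases "i = 1")
    case True
    then have "j - 1 \<in> {1..n}" using ij by (auto simp: off_diagonal_def)
    then show ?thesis
      using ij True by (auto simp: almost_pos_def simple_roots_def entry_def)
  next
    case False
    then show ?thesis using ij entry_pos_root by (auto simp: almost_pos_def)
  qed
qed

lemma entry_neg_simple_iff:
  assumes "(i, j) \<in> off_diagonal n"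
  shows "entry n i j \<in> uminus ` simple_roots n \<longleftrightarrow> i = 1"
proof
  assume "entry n i j \<in> uminus ` simple_roots n"
  then show "i = 1"
    using assms entry_pos_root pos_root_ne_neg_alpha by (fastforce simp: simple_roots_def)
next
  assume "i = 1"
  then show "entry n i j \<in> uminus ` simple_roots n"
    using assms by (force simp: off_diagonal_def simple_roots_def entry_def)
qed

lemma simple_coord_entry_column:
  assumes "(k, l) \<in> off_diagonal n" "k \<noteq> 1" "l \<noteq> 1"
  shows "simple_coord n (entry n k l) (l - 1) = 0"
  using assms
  by (auto simp: off_diagonal_def entry_def simple_coord_add simple_coord_diff simple_coord_eps)

definition shift :: "nat \<Rightarrow> nat \<Rightarrow> nat \<Rightarrow> nat" where
  "shift n m x = (x - 1 + m) mod Suc n + 1"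

lemma shift_in_range: "shift n m x \<in> {1..Suc n}"
  by (simp add: shift_def)

lemma shift_0: "x \<in> {1..Suc n} \<Longrightarrow> shift n 0 x = x"
  by (auto simp: shift_def)

lemma shift_1: "x \<in> {1..Suc n} \<Longrightarrow> shift n 1 x = (if x = Suc n then 1 else Suc x)"
  by (auto simp: shift_def)

lemma shift_shift: "shift n m (shift n m' x) = shift n (m + m') x"
  by (simp add: shift_def mod_add_right_eq add_ac)

lemma shift_period: "x \<in> {1..Suc n} \<Longrightarrow> shift n (Suc n) x = x"
  unfolding shift_def mod_add_self2 by auto

lemma shift_inverse:
  assumes "x \<in> {1..Suc n}"
  shows "shift n (m * n) (shift n m x) = x"
proof -
  have "shift n (m * n) (shift n m x) = shift n (m * Suc n) x"
    by (simp add: shift_shift add.commute)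
  also have "\<dots> = x"
    using assms unfolding shift_def by (simp only: mod_mult_self1) auto
  finally show ?thesis .
qed

lemma shift_inj:
  assumes "x \<in> {1..Suc n}" "y \<in> {1..Suc n}" "shift n m x = shift n m y"
  shows "x = y"
  by (metis assms shift_inverse)

lemma shift_to_1:
  assumes "x \<in> {1..Suc n}"
  shows "\<exists>m < Suc n. shift n m x = 1"
proof (cases "x = 1")
  case True
  then show ?thesis by (intro exI[of _ 0]) (simp add: shift_def)
next
  case False
  then show ?thesis
    using assms by (intro exI[of _ "Suc n + 1 - x"]) (auto simp: shift_def)
qed

lemma shift_1_ne_1: "0 < m \<Longrightarrow> m < Suc n \<Longrightarrow> shift n m 1 \<noteq> 1"
  by (simp add: shift_def)

lemma shift_off_diagonal: "(i, j) \<in> off_diagonal n \<Longrightarrow> (shift n m i, shift n m j) \<in> off_diagonal n"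
  unfolding off_diagonal_def using shift_in_range shift_inj by blast

section \<open>The action of tau on the array\<close>

lemma tau_neg_alpha:
  assumes "p \<in> {1..n}"
  shows "tau n (- alpha n p) = sprod n [1..<p] (alpha n p)"
proof -
  have "(THE i. i \<in> {1..n} \<and> - alpha n p = - alpha n i) = p"
    using assms neg_alpha_inj by blast
  then show ?thesis
    using assms unfolding tau_def by auto
qed

lemma tau_eps_add_eps_last:
  assumes "p \<in> {1..n}"
  shows "tau n (eps p + eps n) = - alpha n p"
proof -
  have "eps p + eps n = entry n (Suc n) p" "(Suc n, p) \<in> off_diagonal n"
    using assms by (auto simp: entry_def off_diagonal_def)
  then have not_neg: "\<not> (\<exists>i\<in>{1..n}. eps p + eps n = - alpha n i)"
    using entry_pos_root pos_root_ne_neg_alpha by fastforce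
  have "(THE i. i \<in> {1..n} \<and> eps p + eps n = sprod n (rev [Suc i..<Suc n]) (alpha n i)) = p"
    using assms sprod_rev_alpha by (intro the_equality) (auto dest: eps_inj)
  moreover have "\<exists>i\<in>{1..n}. eps p + eps n = sprod n (rev [Suc i..<Suc n]) (alpha n i)"
    using assms sprod_rev_alpha[OF assms] by (intro bexI[of _ p]) auto
  ultimately show ?thesis
    using not_neg unfolding tau_def by (simp only: if_False if_True Let_def)
qed

lemma tau_eq_cox:
  assumes "\<forall>k\<in>{1..n}. b \<noteq> - alpha n k" "\<forall>k\<in>{1..n}. b \<noteq> eps k + eps n"
  shows "tau n b = cox n b"
proof -
  have "\<not> (\<exists>i\<in>{1..n}. b = sprod n (rev [Suc i..<Suc n]) (alpha n i))"
    using assms(2) sprod_rev_alpha by blast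
  then show ?thesis
    using assms(1) unfolding tau_def by auto
qed

lemma tau_entry:
  assumes "1 \<le> n" "(i, j) \<in> off_diagonal n"
  shows "tau n (entry n i j) = entry n (shift n 1 i) (shift n 1 j)"
proof -
  have i: "i \<in> {1..Suc n}" and j: "j \<in> {1..Suc n}" and "i \<noteq> j"
    using assms(2) by (auto simp: off_diagonal_def)
  note shifts = shift_1[OF i] shift_1[OF j]
  consider "i = 1" | "i = Suc n" | "2 \<le> i" "i \<le> n"
    using i by force
  then show ?thesis
  proof cases
    case 1
    have "j - 1 \<in> {1..n}"
      using j \<open>i \<noteq> j\<close> 1 by auto
    then have "tau n (entry n i j) = sprod n [1..<j - 1] (alpha n (j - 1))"
      using 1 by (simp add: entry_def tau_neg_alpha)
    then show ?thesis
      using 1 j \<open>i \<noteq> j\<close> assms(1) shifts sprod_upto_alpha[OF \<open>j - 1 \<in> {1..n}\<close>]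
      by (auto simp: entry_def smul_def fun_eq_iff)
  next
    case 2
    then show ?thesis
      using j \<open>i \<noteq> j\<close> shifts by (auto simp: entry_def tau_eps_add_eps_last)
  next
    case 3
    have "entry n i j \<notin> uminus ` simple_roots n"
      using entry_neg_simple_iff[OF assms(2)] 3 by simp
    moreover have "entry n i j \<noteq> eps k + eps n" for k
    proof -
      have "entry n i j n < (eps k + eps n) n"
        using 3 \<open>i \<noteq> j\<close> by (auto simp: entry_def eps_def)
      then show ?thesis by auto
    qed
    ultimately have "tau n (entry n i j) = cox n (entry n i j)"
      by (intro tau_eq_cox) (auto simp: simple_roots_def)
    then show ?thesis
      using 3 j \<open>i \<noteq> j\<close> assms(1) shifts
      by (auto simp: entry_def cox_diff cox_add cox_eps add_ac)
  qed
qed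

lemma tau_funpow_entry:
  assumes "1 \<le> n" "(i, j) \<in> off_diagonal n"
  shows "(tau n ^^ m) (entry n i j) = entry n (shift n m i) (shift n m j)"
proof (induction m)
  case 0
  then show ?case using assms(2) by (simp add: off_diagonal_def shift_0)
next
  case (Suc m)
  then show ?case
    using tau_entry[OF assms(1) shift_off_diagonal[OF assms(2)]] by (simp add: shift_shift)
qed

lemma tau_almost_pos: "1 \<le> n \<Longrightarrow> tau n ` almost_pos n \<subseteq> almost_pos n"
  using tau_entry shift_off_diagonal by (force simp: almost_pos_eq_entries)

lemma tau_period:
  assumes "1 \<le> n" "a \<in> almost_pos n"
  shows "(tau n ^^ Suc n) a = a"
proof -
  obtain i j where ij: "(i, j) \<in> off_diagonal n" "a = entry n i j"
    using assms(2) by (auto simp: almost_pos_eq_entries)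
  then show ?thesis
    using tau_funpow_entry[OF assms(1) ij(1), of "Suc n"] by (auto simp: off_diagonal_def shift_period)
qed

lemma tau_reaches_neg_simple:
  assumes "1 \<le> n" "a \<in> almost_pos n"
  shows "\<exists>m < Suc n. (tau n ^^ m) a \<in> uminus ` simple_roots n"
proof -
  obtain i j where ij: "(i, j) \<in> off_diagonal n" "a = entry n i j"
    using assms(2) by (auto simp: almost_pos_eq_entries)
  then obtain m where "m < Suc n" "shift n m i = 1"
    using shift_to_1 by (auto simp: off_diagonal_def)
  then show ?thesis
    using ij assms(1) entry_neg_simple_iff[OF shift_off_diagonal[OF ij(1)]]
    by (auto simp: tau_funpow_entry)
qed

lemma tau_leaves_neg_simple:
  assumes "1 \<le> n" "a \<in> uminus ` simple_roots n" "0 < m" "m < Suc n"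
  shows "(tau n ^^ m) a \<notin> uminus ` simple_roots n"
proof -
  obtain k where k: "k \<in> {1..n}" "a = - alpha n k"
    using assms(2) by (auto simp: simple_roots_def)
  then have "(1, Suc k) \<in> off_diagonal n" "a = entry n 1 (Suc k)"
    by (auto simp: off_diagonal_def entry_def)
  then show ?thesis
    using assms entry_neg_simple_iff[OF shift_off_diagonal] shift_1_ne_1
    by (simp add: tau_funpow_entry)
qed

section \<open>The compatibility degree\<close>

lemma is_compat_degree_row_1:
  assumes "is_compat_degree n f" "(1, j) \<in> off_diagonal n" "(k, l) \<in> off_diagonal n"
  shows "real_of_int (f (entry n 1 j) (entry n k l))
       = (if k = 1 then 0 else simple_coord n (entry n k l) (j - 1))"
proof -
  have "j - 1 \<in> {1..n}" and row: "entry n 1 j = - alpha n (j - 1)"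
    using assms(2) by (auto simp: off_diagonal_def entry_def)
  show ?thesis
  proof (cases "k = 1")
    case True
    then have "l - 1 \<in> {1..n}" "entry n k l = - alpha n (l - 1)"
      using assms(3) by (auto simp: off_diagonal_def entry_def)
    then show ?thesis
      using assms(1) \<open>j - 1 \<in> {1..n}\<close> True row by (simp add: is_compat_degree_def)
  next
    case False
    then have pos: "entry n k l \<in> pos_roots n"
      using entry_pos_root assms(3) by blast
    then show ?thesis
      using assms(1) \<open>j - 1 \<in> {1..n}\<close> False row
        coeff_eq_simple_coord[OF pos_root_outside[OF pos] \<open>j - 1 \<in> {1..n}\<close>]
      by (simp add: is_compat_degree_def)
  qed
qed

lemma is_compat_degree_shift:
  assumes "1 \<le> n" "is_compat_degree n f" "(i, j) \<in> off_diagonal n" "(k, l) \<in> off_diagonal n"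
  shows "f (entry n (shift n m i) (shift n m j)) (entry n (shift n m k) (shift n m l))
       = f (entry n i j) (entry n k l)"
proof -
  have "f ((tau n ^^ m) a) ((tau n ^^ m) b) = f a b" if "a \<in> almost_pos n" "b \<in> almost_pos n" for a b
    using funpow_invariant[OF tau_almost_pos[OF assms(1)], of f] assms(2) that
    by (simp add: is_compat_degree_def)
  then show ?thesis
    using assms by (force simp: tau_funpow_entry almost_pos_eq_entries)
qed

lemma is_compat_degree_entry:
  assumes "1 \<le> n" "is_compat_degree n f" "(i, j) \<in> off_diagonal n" "(k, l) \<in> off_diagonal n"
    and "shift n m i = 1"
  shows "real_of_int (f (entry n i j) (entry n k l))
       = (if shift n m k = 1 then 0
          else simple_coord n (entry n (shift n m k) (shift n m l)) (shift n m j - 1))"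
  using is_compat_degree_shift[OF assms(1-4), of m, symmetric] assms(5)
    is_compat_degree_row_1[OF assms(2) _ shift_off_diagonal[OF assms(4)], of "shift n m j" m]
    shift_off_diagonal[OF assms(3), of m]
  by simp

lemma is_compat_degree_unique:
  assumes "1 \<le> n" "is_compat_degree n f" "is_compat_degree n f'"
    and "a \<in> almost_pos n" "b \<in> almost_pos n"
  shows "f a b = f' a b"
proof (rule invariant_eq_if_eq_on_transversal[OF tau_almost_pos[OF assms(1)]])
  show "\<exists>m. (tau n ^^ m) a \<in> uminus ` simple_roots n" if "a \<in> almost_pos n" for a
    using tau_reaches_neg_simple[OF assms(1) that] by blast
  show "f a b = f' a b" if a: "a \<in> uminus ` simple_roots n" and b: "b \<in> almost_pos n" for a b
  proof -
    obtain p where "p \<in> {1..n}" "a = - alpha n p"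
      using a by (auto simp: simple_roots_def)
    then have "(1, Suc p) \<in> off_diagonal n" "a = entry n 1 (Suc p)"
      by (auto simp: off_diagonal_def entry_def)
    moreover obtain k l where "(k, l) \<in> off_diagonal n" "b = entry n k l"
      using b by (auto simp: almost_pos_eq_entries)
    ultimately have "real_of_int (f a b) = real_of_int (f' a b)"
      using is_compat_degree_row_1 assms(2,3) by presburger
    then show ?thesis by simp
  qed
qed (use assms in \<open>auto simp: is_compat_degree_def\<close>)

lemma compat_degree_exists:
  assumes "1 \<le> n"
  shows "\<exists>f. is_compat_degree n f
           \<and> (\<forall>a b. \<not> (a \<in> almost_pos n \<and> b \<in> almost_pos n) \<longrightarrow> f a b = 0)"
proof -
  define g where "g a b = (if b \<in> uminus ` simple_roots n then 0
      else \<lfloor>coeff n b (THE p. p \<in> {1..n} \<and> a = - alpha n p)\<rfloor>)" for a b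
  have "\<exists>f. (\<forall>a\<in>almost_pos n. \<forall>b\<in>almost_pos n. f (tau n a) (tau n b) = f a b)
      \<and> (\<forall>a\<in>uminus ` simple_roots n. \<forall>b. f a b = g a b)"
    by (rule invariant_extension[OF tau_almost_pos[OF assms], where N = "Suc n"])
      (use tau_period tau_reaches_neg_simple tau_leaves_neg_simple assms in blast)+
  then obtain f where inv: "\<forall>a\<in>almost_pos n. \<forall>b\<in>almost_pos n. f (tau n a) (tau n b) = f a b"
    and init: "\<And>a b. a \<in> uminus ` simple_roots n \<Longrightarrow> f a b = g a b"
    by blast
  define f' where "f' a b = (if a \<in> almost_pos n \<and> b \<in> almost_pos n then f a b else 0)" for a b
  have neg: "- alpha n p \<in> uminus ` simple_roots n" "- alpha n p \<in> almost_pos n" if "p \<in> {1..n}" for p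
    using that by (auto simp: almost_pos_def simple_roots_def)
  have "real_of_int (f' (- alpha n p) b) = coeff n b p" if "p \<in> {1..n}" "b \<in> pos_roots n" for p b
  proof -
    have "(THE q. q \<in> {1..n} \<and> - alpha n p = - alpha n q) = p"
      using that(1) neg_alpha_inj by blast
    moreover have "b \<notin> uminus ` simple_roots n"
      using pos_root_ne_neg_alpha[OF that(2)] by (force simp: simple_roots_def)
    moreover have "coeff n b p \<in> \<int>"
      using coeff_pos_root_Ints that by blast
    ultimately show ?thesis
      using init[OF neg(1)[OF that(1)]] neg(2)[OF that(1)] that(2) by (simp add: f'_def g_def almost_pos_def)
  qed
  moreover have "f' (- alpha n p) (- alpha n q) = 0" if "p \<in> {1..n}" "q \<in> {1..n}" for p q
    using init[OF neg(1)[OF that(1)]] neg[OF that(1)] neg[OF that(2)] by (simp add: f'_def g_def)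
  moreover have "f' (tau n a) (tau n b) = f' a b" if "a \<in> almost_pos n" "b \<in> almost_pos n" for a b
    using inv that tau_almost_pos[OF assms] by (auto simp: f'_def)
  ultimately have "is_compat_degree n f'"
    by (simp add: is_compat_degree_def)
  then show ?thesis
    by (auto simp: f'_def)
qed

lemma is_compat_degree_compat_degree:
  assumes "1 \<le> n"
  shows "is_compat_degree n (compat_degree n)"
proof -
  let ?P = "\<lambda>f. is_compat_degree n f
      \<and> (\<forall>a b. \<not> (a \<in> almost_pos n \<and> b \<in> almost_pos n) \<longrightarrow> f a b = 0)"
  obtain f where "?P f"
    using compat_degree_exists[OF assms] by blast
  moreover have "g = f" if "?P g" for g
    using that \<open>?P f\<close> is_compat_degree_unique[OF assms] by (fastforce simp: fun_eq_iff)
  ultimately have "compat_degree n = f"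
    unfolding compat_degree_def by (rule the_equality)
  then show ?thesis
    using \<open>?P f\<close> by simp
qed

theorem lemma4p7:
  fixes n i j k :: nat
  assumes "n \<ge> 1"
    and "i \<in> {1..n+1}" and "j \<in> {1..n+1}" and "k \<in> {1..n+1}"
    and "j \<noteq> i" and "k \<noteq> i" and "j \<noteq> k"
  shows "compatible n (entry n i j) (entry n i k)
       \<and> compatible n (entry n j i) (entry n k i)"
proof
  have deg: "is_compat_degree n (compat_degree n)"
    using is_compat_degree_compat_degree assms(1) by simp
  have cells: "(i, j) \<in> off_diagonal n" "(i, k) \<in> off_diagonal n"
    "(j, i) \<in> off_diagonal n" "(k, i) \<in> off_diagonal n"
    using assms by (auto simp: off_diagonal_def)
  obtain m where "shift n m i = 1"
    using shift_to_1 assms(2) by auto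
  then show "compatible n (entry n i j) (entry n i k)"
    using is_compat_degree_entry[OF assms(1) deg cells(1,2)] by (simp add: compatible_def)
  obtain m' where m': "shift n m' j = 1"
    using shift_to_1 assms(3) by auto
  have "shift n m' k \<noteq> 1" "shift n m' i \<noteq> 1"
    using m' shift_inj[of k n j m'] shift_inj[of i n j m'] assms by auto
  then have "simple_coord n (entry n (shift n m' k) (shift n m' i)) (shift n m' i - 1) = 0"
    using simple_coord_entry_column[OF shift_off_diagonal[OF cells(4)]] by simp
  then show "compatible n (entry n j i) (entry n k i)"
    using is_compat_degree_entry[OF assms(1) deg cells(3,4) m'] \<open>shift n m' k \<noteq> 1\<close>
    by (simp add: compatible_def)
qed

end
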